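(* Let $X\sim p$ with $\mathrm{Var}[X]<\infty$, and let $\tau:=-\widetilde{\mathcal{T}}\,\mathrm{id}$, where $\mathrm{id}$ is the identity function. Then $$\mathrm{Var}[X]=\|\tau\|_{L^1(p)}\le\|w\|_{L^1(p)}$$ for every weight $w$ such that $C(p,w)=1$.
   Context: Let $-\infty\le a<b\le\infty$, $p\in L^1(]a,b[)$ with $p>0$ a.e. and $\int_a^b p=1$. A weight is a function $w\in L^1_{\mathrm{loc}}(]a,b[)$ with $w>0$ a.e. and $pw\in L^1_{\mathrm{loc}}(]a,b[)$. Write $\mathbb{E}_p[f]=\int_a^b fp$. $H^1(p,w)=\{h\in L^2(p): h$ locally absolutely continuous, $h'\in L^2(pw)\}$, and $C(p,w)\in[0,\infty]$ is the smallest $C$ with $\mathrm{Var}_p[h]\le C\,\mathbb{E}_p[|h'|^2w]$ for all $h\in H^1(p,w)$. For $h\in L^1(p)$, $\widetilde{\mathcal{T}} h(x)=\frac{1}{p(x)}\int_a^x(h-\mathbb{E}_p[h])\,p$. *)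

theory Defs
  imports "HOL-Analysis.Analysis"
begin

definition Ioo_e :: "ereal \<Rightarrow> ereal \<Rightarrow> real set" where
  "Ioo_e a b = {x. a < ereal x \<and> ereal x < b}"

definition is_density :: "ereal \<Rightarrow> ereal \<Rightarrow> (real \<Rightarrow> real) \<Rightarrow> bool" where
  "is_density a b p \<longleftrightarrow> a < b \<and>
     set_integrable lborel (Ioo_e a b) p \<and>
     (AE x in lborel. x \<in> Ioo_e a b \<longrightarrow> p x > 0) \<and>
     (LINT x : Ioo_e a b | lborel. p x) = 1"

definition loc_integrable :: "ereal \<Rightarrow> ereal \<Rightarrow> (real \<Rightarrow> real) \<Rightarrow> bool" where
  "loc_integrable a b f \<longleftrightarrow> f \<in> borel_measurable lborel \<and>
     (\<forall>c d. {c..d} \<subseteq> Ioo_e a b \<longrightarrow> set_integrable lborel {c..d} f)"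

definition is_weight :: "ereal \<Rightarrow> ereal \<Rightarrow> (real \<Rightarrow> real) \<Rightarrow> (real \<Rightarrow> real) \<Rightarrow> bool" where
  "is_weight a b p w \<longleftrightarrow> loc_integrable a b w \<and>
     (AE x in lborel. x \<in> Ioo_e a b \<longrightarrow> w x > 0) \<and>
     loc_integrable a b (\<lambda>x. p x * w x)"

definition Ep :: "ereal \<Rightarrow> ereal \<Rightarrow> (real \<Rightarrow> real) \<Rightarrow> (real \<Rightarrow> real) \<Rightarrow> real" where
  "Ep a b p f = (LINT x : Ioo_e a b | lborel. f x * p x)"

definition Varp :: "ereal \<Rightarrow> ereal \<Rightarrow> (real \<Rightarrow> real) \<Rightarrow> (real \<Rightarrow> real) \<Rightarrow> real" where
  "Varp a b p f = Ep a b p (\<lambda>x. (f x - Ep a b p f)\<^sup>2)"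

text \<open>h belongs to H^1(p,w) with (a.e.-determined) derivative g:
  h \<in> L^2(p); h is locally absolutely continuous on ]a,b[, i.e. it is the indefinite integral
  of the locally integrable function g = h'; and h' \<in> L^2(p w).\<close>
definition in_H1 :: "ereal \<Rightarrow> ereal \<Rightarrow> (real \<Rightarrow> real) \<Rightarrow> (real \<Rightarrow> real)
     \<Rightarrow> (real \<Rightarrow> real) \<Rightarrow> (real \<Rightarrow> real) \<Rightarrow> bool" where
  "in_H1 a b p w h g \<longleftrightarrow>
     h \<in> borel_measurable lborel \<and>
     set_integrable lborel (Ioo_e a b) (\<lambda>x. (h x)\<^sup>2 * p x) \<and>
     loc_integrable a b g \<and>
     (\<forall>x\<in>Ioo_e a b. \<forall>y\<in>Ioo_e a b. x \<le> y \<longrightarrow> h y - h x = (LINT t : {x..y} | lborel. g t)) \<and>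
     set_integrable lborel (Ioo_e a b) (\<lambda>x. (g x)\<^sup>2 * p x * w x)"

definition Cpw :: "ereal \<Rightarrow> ereal \<Rightarrow> (real \<Rightarrow> real) \<Rightarrow> (real \<Rightarrow> real) \<Rightarrow> ennreal" where
  "Cpw a b p w = Inf {C. \<forall>h g. in_H1 a b p w h g \<longrightarrow>
       ennreal (Varp a b p h) \<le> C * (\<integral>\<^sup>+ x \<in> Ioo_e a b. ennreal ((g x)\<^sup>2 * w x * p x) \<partial>lborel)}"

definition Ttilde :: "ereal \<Rightarrow> ereal \<Rightarrow> (real \<Rightarrow> real) \<Rightarrow> (real \<Rightarrow> real) \<Rightarrow> real \<Rightarrow> real" where
  "Ttilde a b p h x = (1 / p x) *
     (LINT t : {t. a < ereal t \<and> t \<le> x} | lborel. (h t - Ep a b p h) * p t)"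

end

theory Submission
  imports Defs
begin

text \<open>Let \<open>\<mu>\<close> be the mean and \<open>F(x) = \<integral>\<^sub>a\<^sup>x (t - \<mu>) p(t) dt\<close>, so that \<open>\<tau> p = - F\<close>.
  Because \<open>F\<close> vanishes at both ends, \<open>|F(x)| = \<integral> p(t) K(t,x) dt\<close>, where \<open>K(t,x) = |t - \<mu>|\<close> when
  \<open>x\<close> lies on the segment between \<open>t\<close> and \<open>\<mu>\<close> and \<open>0\<close> otherwise. Since \<open>\<integral> K(t,x) dx = (t - \<mu>)\<^sup>2\<close>, Tonelli gives
  \<open>\<integral> |\<tau>| p = \<integral> |F| = Var[X]\<close>. For the bound, \<open>h = id\<close> lies in \<open>H\<^sup>1(p,w)\<close> with \<open>h' = 1\<close> as soon
  as \<open>\<integral> w p < \<infinity>\<close>, and the Poincare inequality with constant \<open>C(p,w) = 1\<close> then reads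
  \<open>Var[X] \<le> \<integral> w p\<close>.\<close>

lemma abs_le_one_plus_square: "\<bar>x::real\<bar> \<le> 1 + x\<^sup>2"
  using zero_le_power2[of "\<bar>x\<bar> - 1"] by (simp add: power2_diff)

lemma set_integrable_first_moment:
  fixes p :: "real \<Rightarrow> real"
  assumes p_int: "set_integrable lborel I p"
    and second: "set_integrable lborel I (\<lambda>x. x\<^sup>2 * p x)"
    and p_nonneg: "AE x in lborel. x \<in> I \<longrightarrow> 0 \<le> p x"
  shows "set_integrable lborel I (\<lambda>x. x * p x)"
  unfolding set_integrable_def
proof (rule Bochner_Integration.integrable_bound)
  show "integrable lborel (\<lambda>x. indicator I x *\<^sub>R p x + indicator I x *\<^sub>R (x\<^sup>2 * p x))"
    using p_int second by (auto simp: set_integrable_def)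
  show "AE x in lborel. norm (indicator I x *\<^sub>R (x * p x))
      \<le> norm (indicator I x *\<^sub>R p x + indicator I x *\<^sub>R (x\<^sup>2 * p x))"
    using p_nonneg
  proof eventually_elim
    case (elim x)
    have "\<bar>x\<bar> * p x \<le> (1 + x\<^sup>2) * p x" if "x \<in> I"
      using elim that abs_le_one_plus_square by (intro mult_right_mono) auto
    then show ?case
      using elim by (auto simp: indicator_def abs_mult algebra_simps)
  qed
next
  have "(\<lambda>x. indicator I x * p x) \<in> borel_measurable lborel"
    using p_int by (auto simp: set_integrable_def)
  then have "(\<lambda>x. x * (indicator I x * p x)) \<in> borel_measurable lborel"
    by measurable
  then show "(\<lambda>x. indicator I x *\<^sub>R (x * p x)) \<in> borel_measurable lborel"
    by (simp add: mult.left_commute)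
qed

lemma integral_mult_pos_AE:
  fixes f q :: "'a \<Rightarrow> real"
  assumes int: "integrable M (\<lambda>x. f x * q x)"
    and q_nonneg: "AE x in M. 0 \<le> q x"
    and f_pos: "AE x in M. q x \<noteq> 0 \<longrightarrow> 0 < f x"
    and q_nonzero: "\<not> (AE x in M. q x = 0)"
  shows "0 < (\<integral>x. f x * q x \<partial>M)"
proof -
  have nonneg: "AE x in M. 0 \<le> f x * q x"
    using q_nonneg f_pos by eventually_elim (auto intro: mult_nonneg_nonneg)
  have "(\<integral>x. f x * q x \<partial>M) \<noteq> 0"
  proof
    assume "(\<integral>x. f x * q x \<partial>M) = 0"
    then have "AE x in M. f x * q x = 0"
      using integral_nonneg_eq_0_iff_AE[OF int nonneg] by simp
    then have "AE x in M. q x = 0"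
      using f_pos by eventually_elim auto
    with q_nonzero show False ..
  qed
  with integral_nonneg_AE[OF nonneg] show ?thesis by linarith
qed

lemma integral_mean_in_Ioo_e:
  fixes q :: "real \<Rightarrow> real"
  assumes q_nonneg: "AE t in lborel. 0 \<le> q t"
    and q_int: "integrable lborel q" and first: "integrable lborel (\<lambda>t. t * q t)"
    and q_1: "(\<integral>t. q t \<partial>lborel) = 1"
    and support: "AE t in lborel. q t \<noteq> 0 \<longrightarrow> t \<in> Ioo_e a b"
  shows "(\<integral>t. t * q t \<partial>lborel) \<in> Ioo_e a b"
proof -
  have q_nonzero: "\<not> (AE t in lborel. q t = 0)"
    using q_1 integral_eq_zero_AE by fastforce
  have "a < ereal (\<integral>t. t * q t \<partial>lborel)"
  proof (cases a)
    case (real c)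
    have "0 < (\<integral>t. (t - c) * q t \<partial>lborel)"
      using support q_int first q_nonneg q_nonzero
      by (intro integral_mult_pos_AE)
        (auto simp: real Ioo_e_def left_diff_distrib elim: eventually_mono)
    then show ?thesis
      using q_int first q_1 by (simp add: real left_diff_distrib)
  qed (use support q_nonzero in \<open>auto simp: Ioo_e_def\<close>)
  moreover have "ereal (\<integral>t. t * q t \<partial>lborel) < b"
  proof (cases b)
    case (real c)
    have "0 < (\<integral>t. (c - t) * q t \<partial>lborel)"
      using support q_int first q_nonneg q_nonzero
      by (intro integral_mult_pos_AE)
        (auto simp: real Ioo_e_def left_diff_distrib elim: eventually_mono)
    then show ?thesis
      using q_int first q_1 by (simp add: real left_diff_distrib)
  qed (use support q_nonzero in \<open>auto simp: Ioo_e_def\<close>)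
  ultimately show ?thesis
    by (simp add: Ioo_e_def)
qed

lemma ennreal_le_Inf_mult:
  fixes x L :: ennreal and S :: "ennreal set"
  assumes S: "S \<noteq> {}" and L: "L \<noteq> \<infinity>" and le: "\<And>C. C \<in> S \<Longrightarrow> x \<le> C * L"
  shows "x \<le> Inf S * L"
proof (cases "L = 0")
  case True
  from S obtain C where "C \<in> S" by blast
  with le True show ?thesis by fastforce
next
  case False
  have "x / L \<le> C" if "C \<in> S" for C
    using False le[OF that]
    by (intro divide_le_posI_ennreal) (auto simp: mult.commute zero_less_iff_neq_zero)
  then have "x / L * L \<le> Inf S * L"
    by (intro mult_right_mono Inf_greatest) auto
  then show ?thesis
    using False L by (simp add: ennreal_divide_times top.not_eq_extremum)
qed

definition segment_kernel :: "real \<Rightarrow> real \<Rightarrow> real \<Rightarrow> real" where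
  "segment_kernel \<mu> t x =
     (if t \<le> x \<and> x \<le> \<mu> then \<mu> - t else if \<mu> < x \<and> x < t then t - \<mu> else 0)"

lemma segment_kernel_nonneg: "0 \<le> segment_kernel \<mu> t x"
  by (simp add: segment_kernel_def)

lemma nn_integral_segment_kernel:
  assumes I: "is_interval I" and t: "t \<in> I" and \<mu>: "\<mu> \<in> I"
  shows "(\<integral>\<^sup>+x\<in>I. ennreal (segment_kernel \<mu> t x) \<partial>lborel) = ennreal ((t - \<mu>)\<^sup>2)"
proof (cases "t \<le> \<mu>")
  case True
  have "{t..\<mu>} \<subseteq> I"
    using I t \<mu> unfolding is_interval_1 by (meson atLeastAtMost_iff subsetI)
  then have "(\<integral>\<^sup>+x\<in>I. ennreal (segment_kernel \<mu> t x) \<partial>lborel)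
      = (\<integral>\<^sup>+x. ennreal (\<mu> - t) * indicator {t..\<mu>} x \<partial>lborel)"
    using True by (intro nn_integral_cong) (auto simp: segment_kernel_def indicator_def)
  also have "\<dots> = ennreal (\<mu> - t) * ennreal (\<mu> - t)"
    using True by (simp add: nn_integral_cmult_indicator)
  also have "\<dots> = ennreal ((t - \<mu>)\<^sup>2)"
    using True by (simp add: power2_eq_square flip: ennreal_mult) (simp add: algebra_simps)
  finally show ?thesis .
next
  case False
  have "{\<mu><..<t} \<subseteq> I"
    using I t \<mu> unfolding is_interval_1 by (meson greaterThanLessThan_iff less_imp_le subsetI)
  then have "(\<integral>\<^sup>+x\<in>I. ennreal (segment_kernel \<mu> t x) \<partial>lborel)
      = (\<integral>\<^sup>+x. ennreal (t - \<mu>) * indicator {\<mu><..<t} x \<partial>lborel)"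
    using False by (intro nn_integral_cong) (auto simp: segment_kernel_def indicator_def)
  also have "\<dots> = ennreal (t - \<mu>) * ennreal (t - \<mu>)"
    using False by (simp add: nn_integral_cmult_indicator)
  also have "\<dots> = ennreal ((t - \<mu>)\<^sup>2)"
    using False by (simp add: power2_eq_square flip: ennreal_mult)
  finally show ?thesis .
qed

lemma abs_integral_Iic_eq_segment_kernel:
  fixes q :: "real \<Rightarrow> real"
  assumes q_nonneg: "AE t in lborel. 0 \<le> q t"
    and int: "integrable lborel (\<lambda>t. (t - \<mu>) * q t)"
    and centred: "(\<integral>t. (t - \<mu>) * q t \<partial>lborel) = 0"
  shows "ennreal \<bar>LINT t:{..x}|lborel. (t - \<mu>) * q t\<bar>
    = (\<integral>\<^sup>+t. ennreal (q t * segment_kernel \<mu> t x) \<partial>lborel)"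
proof -
  let ?F = "LINT t:{..x}|lborel. (t - \<mu>) * q t"
  have below: "set_integrable lborel {..x} (\<lambda>t. (t - \<mu>) * q t)"
    and above: "set_integrable lborel {x<..} (\<lambda>t. (t - \<mu>) * q t)"
    using int unfolding set_integrable_def by (intro integrable_mult_indicator; simp)+
  have nonneg: "AE t in lborel. 0 \<le> q t * segment_kernel \<mu> t x"
    using q_nonneg by eventually_elim (simp add: segment_kernel_nonneg)
  have "integrable lborel (\<lambda>t. q t * segment_kernel \<mu> t x)
    \<and> (\<integral>t. q t * segment_kernel \<mu> t x \<partial>lborel) = \<bar>?F\<bar>"
  proof (cases "x \<le> \<mu>")
    case True
    then have "(\<lambda>t. q t * segment_kernel \<mu> t x) = (\<lambda>t. - (indicator {..x} t * ((t - \<mu>) * q t)))"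
      by (auto simp: segment_kernel_def indicator_def fun_eq_iff algebra_simps)
    moreover have "0 \<le> (\<integral>t. q t * segment_kernel \<mu> t x \<partial>lborel)"
      using nonneg by (rule integral_nonneg_AE)
    ultimately show ?thesis
      using below by (simp add: set_integrable_def set_lebesgue_integral_def)
  next
    case False
    \<comment> \<open>Here centredness trades the integral over \<open>{..x}\<close> for minus the one over \<open>{x<..}\<close>.\<close>
    then have eq: "(\<lambda>t. q t * segment_kernel \<mu> t x) = (\<lambda>t. indicator {x<..} t * ((t - \<mu>) * q t))"
      by (auto simp: segment_kernel_def indicator_def fun_eq_iff algebra_simps)
    have "{..x} \<union> {x<..} = UNIV" by auto
    then have "0 = (LINT t:{..x} \<union> {x<..}|lborel. (t - \<mu>) * q t)"
      using centred by (simp add: set_lebesgue_integral_def)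
    also have "\<dots> = ?F + (LINT t:{x<..}|lborel. (t - \<mu>) * q t)"
      by (rule set_integral_Un[OF _ below above]) auto
    finally have "(\<integral>t. q t * segment_kernel \<mu> t x \<partial>lborel) = - ?F"
      unfolding eq by (simp add: set_lebesgue_integral_def)
    moreover have "0 \<le> (\<integral>t. q t * segment_kernel \<mu> t x \<partial>lborel)"
      using nonneg by (rule integral_nonneg_AE)
    ultimately show ?thesis
      using above unfolding eq by (simp add: set_integrable_def)
  qed
  then show ?thesis
    using nn_integral_eq_integral[OF _ nonneg] by simp
qed

lemma nn_integral_abs_integral_Iic:
  fixes q :: "real \<Rightarrow> real" and I :: "real set"
  assumes q_meas[measurable]: "q \<in> borel_measurable lborel"
    and q_nonneg: "AE t in lborel. 0 \<le> q t"
    and int: "integrable lborel (\<lambda>t. (t - \<mu>) * q t)"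
    and centred: "(\<integral>t. (t - \<mu>) * q t \<partial>lborel) = 0"
    and I_meas[measurable]: "I \<in> sets lborel" and I: "is_interval I" and \<mu>: "\<mu> \<in> I"
    and support: "AE t in lborel. q t \<noteq> 0 \<longrightarrow> t \<in> I"
  shows "(\<integral>\<^sup>+x\<in>I. ennreal \<bar>LINT t:{..x}|lborel. (t - \<mu>) * q t\<bar> \<partial>lborel)
    = (\<integral>\<^sup>+t. ennreal ((t - \<mu>)\<^sup>2 * q t) \<partial>lborel)"
proof -
  let ?K = "\<lambda>x t. ennreal (q t * segment_kernel \<mu> t x) * indicator I x"
  have K_meas: "case_prod ?K \<in> borel_measurable (lborel \<Otimes>\<^sub>M lborel)"
    unfolding segment_kernel_def by measurable
  have "(\<integral>\<^sup>+x\<in>I. ennreal \<bar>LINT t:{..x}|lborel. (t - \<mu>) * q t\<bar> \<partial>lborel)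
      = (\<integral>\<^sup>+x. \<integral>\<^sup>+t. ?K x t \<partial>lborel \<partial>lborel)"
    unfolding abs_integral_Iic_eq_segment_kernel[OF q_nonneg int centred]
    by (intro nn_integral_cong nn_integral_multc[symmetric]) (simp add: segment_kernel_def)
  also have "\<dots> = (\<integral>\<^sup>+t. \<integral>\<^sup>+x. ?K x t \<partial>lborel \<partial>lborel)"
    using lborel_pair.Fubini'[OF K_meas] by simp
  also have "\<dots> = (\<integral>\<^sup>+t. ennreal ((t - \<mu>)\<^sup>2 * q t) \<partial>lborel)"
  proof (rule nn_integral_cong_AE)
    show "AE t in lborel. (\<integral>\<^sup>+x. ?K x t \<partial>lborel) = ennreal ((t - \<mu>)\<^sup>2 * q t)"
      using q_nonneg support
    proof eventually_elim
      case (elim t)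
      show ?case
      proof (cases "q t = 0")
        case False
        have "(\<integral>\<^sup>+x. ?K x t \<partial>lborel)
            = ennreal (q t) * (\<integral>\<^sup>+x\<in>I. ennreal (segment_kernel \<mu> t x) \<partial>lborel)"
          using elim by (subst nn_integral_cmult[symmetric])
            (auto simp: segment_kernel_def ennreal_mult mult.assoc intro!: nn_integral_cong)
        also have "\<dots> = ennreal (q t) * ennreal ((t - \<mu>)\<^sup>2)"
          using elim False by (simp add: nn_integral_segment_kernel[OF I _ \<mu>])
        also have "\<dots> = ennreal ((t - \<mu>)\<^sup>2 * q t)"
          using elim by (simp add: ennreal_mult mult.commute)
        finally show ?thesis .
      qed simp
    qed
  qed
  finally show ?thesis .
qed

lemma sets_Ioo_e [measurable]: "Ioo_e a b \<in> sets borel"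
  unfolding Ioo_e_def by measurable

lemma is_interval_Ioo_e: "is_interval (Ioo_e a b)"
  unfolding is_interval_1 Ioo_e_def
  by (metis ereal_less_eq(3) mem_Collect_eq order.strict_trans1 order.strict_trans2)

lemma abs_Ttilde_mult_density:
  assumes x: "x \<in> Ioo_e a b" and px: "0 < p x"
  shows "\<bar>Ttilde a b p h x\<bar> * p x
    = \<bar>LINT t:{..x}|lborel. (h t - Ep a b p h) * (indicator (Ioo_e a b) t * p t)\<bar>"
proof -
  have "{t. a < ereal t \<and> t \<le> x} = {..x} \<inter> Ioo_e a b"
    using x by (auto simp: Ioo_e_def) (metis ereal_less_eq(3) order.strict_trans1)
  then show ?thesis
    using px unfolding Ttilde_def set_lebesgue_integral_def
    by (auto simp: abs_mult indicator_inter_arith mult_ac intro!: Bochner_Integration.integral_cong)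
qed

lemma Varp_identity_eq_nn_integral_abs_Ttilde:
  assumes dens: "is_density a b p"
    and second: "set_integrable lborel (Ioo_e a b) (\<lambda>x. x\<^sup>2 * p x)"
  shows "ennreal (Varp a b p (\<lambda>t. t))
    = (\<integral>\<^sup>+x\<in>Ioo_e a b. ennreal (\<bar>Ttilde a b p (\<lambda>t. t) x\<bar> * p x) \<partial>lborel)"
proof -
  define I where "I = Ioo_e a b"
  define q where "q = (\<lambda>t. indicator I t * p t)"
  define \<mu> where "\<mu> = Ep a b p (\<lambda>t. t)"
  have p_int: "set_integrable lborel I p"
    and p_pos: "AE x in lborel. x \<in> I \<longrightarrow> 0 < p x" and p_1: "(LINT x:I|lborel. p x) = 1"
    using dens by (auto simp: is_density_def I_def)
  have first: "set_integrable lborel I (\<lambda>x. x * p x)"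
    using p_int second p_pos unfolding I_def
    by (intro set_integrable_first_moment) (auto elim: eventually_mono)
  have q_int: "integrable lborel q" and q_1: "(\<integral>t. q t \<partial>lborel) = 1"
    and first_q: "integrable lborel (\<lambda>t. t * q t)" and second_q: "integrable lborel (\<lambda>t. t\<^sup>2 * q t)"
    using p_int p_1 first second
    by (simp_all add: q_def I_def set_integrable_def set_lebesgue_integral_def mult_ac)
  have q_nonneg: "AE t in lborel. 0 \<le> q t"
    using p_pos by eventually_elim (auto simp: q_def indicator_def)
  have support: "q t \<noteq> 0 \<Longrightarrow> t \<in> I" for t
    by (simp add: q_def indicator_def)
  have \<mu>_eq: "\<mu> = (\<integral>t. t * q t \<partial>lborel)"
    by (simp add: \<mu>_def Ep_def q_def I_def set_lebesgue_integral_def mult_ac)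
  have \<mu>_I: "\<mu> \<in> I"
    unfolding \<mu>_eq I_def using support
    by (intro integral_mean_in_Ioo_e[OF q_nonneg q_int first_q q_1]) (auto simp: I_def)
  have centred_int: "integrable lborel (\<lambda>t. (t - \<mu>) * q t)"
    and centred: "(\<integral>t. (t - \<mu>) * q t \<partial>lborel) = 0"
    using q_int first_q q_1 by (simp_all add: left_diff_distrib \<mu>_eq)
  have Var_eq: "Varp a b p (\<lambda>t. t) = (\<integral>t. (t - \<mu>)\<^sup>2 * q t \<partial>lborel)"
    unfolding Varp_def \<mu>_def[symmetric]
    by (simp add: Ep_def q_def I_def set_lebesgue_integral_def mult_ac)
  have "(\<lambda>t. (t - \<mu>)\<^sup>2 * q t) = (\<lambda>t. t\<^sup>2 * q t - 2 * \<mu> * (t * q t) + \<mu>\<^sup>2 * q t)"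
    by (simp add: fun_eq_iff power2_diff algebra_simps)
  then have Var_int: "integrable lborel (\<lambda>t. (t - \<mu>)\<^sup>2 * q t)"
    using q_int first_q second_q by simp
  have "(\<integral>\<^sup>+x\<in>I. ennreal (\<bar>Ttilde a b p (\<lambda>t. t) x\<bar> * p x) \<partial>lborel)
      = (\<integral>\<^sup>+x\<in>I. ennreal \<bar>LINT t:{..x}|lborel. (t - \<mu>) * q t\<bar> \<partial>lborel)"
    using p_pos by (intro nn_integral_cong_AE)
      (auto elim!: eventually_mono simp: indicator_def abs_Ttilde_mult_density q_def I_def \<mu>_def)
  also have "\<dots> = (\<integral>\<^sup>+t. ennreal ((t - \<mu>)\<^sup>2 * q t) \<partial>lborel)"
    using q_int q_nonneg centred_int centred is_interval_Ioo_e \<mu>_I support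
    by (intro nn_integral_abs_integral_Iic) (auto simp: I_def)
  also have "\<dots> = ennreal (Varp a b p (\<lambda>t. t))"
    using Var_int q_nonneg unfolding Var_eq
    by (intro nn_integral_eq_integral) (auto elim: eventually_mono)
  finally show ?thesis
    by (simp add: I_def)
qed

lemma Varp_le_Cpw_mult_energy:
  assumes H1: "in_H1 a b p w h g" and C: "Cpw a b p w \<noteq> \<infinity>"
  shows "ennreal (Varp a b p h)
    \<le> Cpw a b p w * (\<integral>\<^sup>+x\<in>Ioo_e a b. ennreal ((g x)\<^sup>2 * w x * p x) \<partial>lborel)"
proof -
  let ?E = "\<integral>\<^sup>+x\<in>Ioo_e a b. ennreal ((g x)\<^sup>2 * w x * p x) \<partial>lborel"
  have "set_integrable lborel (Ioo_e a b) (\<lambda>x. (g x)\<^sup>2 * w x * p x)"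
    using H1 by (simp add: in_H1_def mult_ac)
  then have "(\<integral>\<^sup>+x. ennreal (indicator (Ioo_e a b) x *\<^sub>R ((g x)\<^sup>2 * w x * p x)) \<partial>lborel) \<noteq> \<infinity>"
    unfolding set_integrable_def by (rule integrableD(2))
  moreover have "?E = (\<integral>\<^sup>+x. ennreal (indicator (Ioo_e a b) x *\<^sub>R ((g x)\<^sup>2 * w x * p x)) \<partial>lborel)"
    by (intro nn_integral_cong) (simp add: indicator_def)
  ultimately have "?E \<noteq> \<infinity>"
    by simp
  with H1 C show ?thesis
    unfolding Cpw_def by (intro ennreal_le_Inf_mult) auto
qed

lemma in_H1_identity:
  assumes "set_integrable lborel (Ioo_e a b) (\<lambda>x. x\<^sup>2 * p x)"
    and "set_integrable lborel (Ioo_e a b) (\<lambda>x. p x * w x)"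
  shows "in_H1 a b p w (\<lambda>t. t) (\<lambda>_. 1)"
  using assms unfolding in_H1_def loc_integrable_def
  by (auto simp: set_integrable_def set_lebesgue_integral_def measure_lborel_Icc
      emeasure_lborel_Icc_eq intro!: integrable_real_indicator)

lemma Varp_identity_le_weight:
  assumes dens: "is_density a b p"
    and second: "set_integrable lborel (Ioo_e a b) (\<lambda>x. x\<^sup>2 * p x)"
    and w: "is_weight a b p w" and C: "Cpw a b p w = 1"
  shows "ennreal (Varp a b p (\<lambda>t. t)) \<le> (\<integral>\<^sup>+x\<in>Ioo_e a b. ennreal (\<bar>w x\<bar> * p x) \<partial>lborel)"
proof -
  let ?I = "Ioo_e a b"
  have p_pos: "AE x in lborel. x \<in> ?I \<longrightarrow> 0 < p x"
    using dens by (simp add: is_density_def)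
  have pw_meas: "(\<lambda>x. p x * w x) \<in> borel_measurable lborel"
    using w by (simp add: is_weight_def loc_integrable_def)
  have abs_pw: "(\<integral>\<^sup>+x\<in>?I. ennreal (\<bar>w x\<bar> * p x) \<partial>lborel)
      = (\<integral>\<^sup>+x. ennreal (norm (indicator ?I x *\<^sub>R (p x * w x))) \<partial>lborel)"
    using p_pos by (intro nn_integral_cong_AE)
      (auto elim!: eventually_mono simp: indicator_def abs_mult)
  show ?thesis
  proof (cases "(\<integral>\<^sup>+x\<in>?I. ennreal (\<bar>w x\<bar> * p x) \<partial>lborel) = \<infinity>")
    case False
    then have "set_integrable lborel ?I (\<lambda>x. p x * w x)"
      unfolding set_integrable_def abs_pw using pw_meas
      by (intro integrableI_bounded) (auto simp: top.not_eq_extremum)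
    then have "in_H1 a b p w (\<lambda>t. t) (\<lambda>_. 1)"
      by (rule in_H1_identity[OF second])
    then have "ennreal (Varp a b p (\<lambda>t. t)) \<le> (\<integral>\<^sup>+x\<in>?I. ennreal (1\<^sup>2 * w x * p x) \<partial>lborel)"
      using Varp_le_Cpw_mult_energy C by fastforce
    also have "\<dots> \<le> (\<integral>\<^sup>+x\<in>?I. ennreal (\<bar>w x\<bar> * p x) \<partial>lborel)"
      using p_pos by (intro nn_integral_mono_AE)
        (auto elim!: eventually_mono simp: indicator_def intro!: ennreal_leI)
    finally show ?thesis .
  qed simp
qed

theorem corollary2p5:
  fixes a b :: ereal and p :: "real \<Rightarrow> real"
  assumes dens: "is_density a b p"
    and finvar: "set_integrable lborel (Ioo_e a b) (\<lambda>x. x\<^sup>2 * p x)"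
  defines "\<tau> \<equiv> (\<lambda>x. - Ttilde a b p (\<lambda>t. t) x)"
  shows "ennreal (Varp a b p (\<lambda>t. t)) = (\<integral>\<^sup>+ x \<in> Ioo_e a b. ennreal (\<bar>\<tau> x\<bar> * p x) \<partial>lborel)
    \<and> (\<forall>w. is_weight a b p w \<and> Cpw a b p w = 1 \<longrightarrow>
         ennreal (Varp a b p (\<lambda>t. t)) \<le> (\<integral>\<^sup>+ x \<in> Ioo_e a b. ennreal (\<bar>w x\<bar> * p x) \<partial>lborel))"
  using Varp_identity_eq_nn_integral_abs_Ttilde[OF dens finvar]
    Varp_identity_le_weight[OF dens finvar]
  by (simp add: \<tau>_def)

end
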